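(* Let $0<\alpha<\frac23$, $C>0$, $M>0$. Any minimizer $\varphi_M\in\Sigma_M$ of $I_M$ satisfies \[ \int_{\mathbb R^3}|\nabla\varphi_M|^2\,dx+\frac14 D[\varphi_M]-\frac{3\alpha C}{2\alpha+2}\int_{\mathbb R^3}|\varphi_M|^{2\alpha+2}\,dx=0. \]
   Context: For $u\in H^1(\mathbb R^3)$ (complex valued), $D[u]:=\iint_{\mathbb R^3\times\mathbb R^3}\frac{|u(x)|^2|u(x')|^2}{|x-x'|}\,dx\,dx'$ and $E[u]:=\frac12\int|\nabla u|^2\,dx+\frac14 D[u]-\frac{C}{2\alpha+2}\int|u|^{2\alpha+2}\,dx$; $\Sigma_M:=\{u\in H^1(\mathbb R^3):\|u\|_{L^2}^2=M\}$, $I_M:=\inf_{\Sigma_M}E$; a minimizer is $\varphi_M\in\Sigma_M$ with $E[\varphi_M]=I_M$. *)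

theory Defs
  imports "HOL-Analysis.Analysis"
begin

type_synonym R3 = "real ^ 3"

definition pd :: "3 \<Rightarrow> (R3 \<Rightarrow> real) \<Rightarrow> R3 \<Rightarrow> real" where
  "pd i f x = frechet_derivative f (at x) (axis i 1)"

fun pds :: "3 list \<Rightarrow> (R3 \<Rightarrow> real) \<Rightarrow> R3 \<Rightarrow> real" where
  "pds [] f = f"
| "pds (i # is) f = pd i (pds is f)"

definition smooth_fun :: "(R3 \<Rightarrow> real) \<Rightarrow> bool" where
  "smooth_fun f \<longleftrightarrow> (\<forall>is x. pds is f differentiable (at x))"

definition test_fun :: "(R3 \<Rightarrow> real) \<Rightarrow> bool" where
  "test_fun \<phi> \<longleftrightarrow> smooth_fun \<phi> \<and> compact (closure {x. \<phi> x \<noteq> 0})"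

definition square_integrable :: "(R3 \<Rightarrow> complex) \<Rightarrow> bool" where
  "square_integrable u \<longleftrightarrow> u \<in> borel_measurable lebesgue \<and>
     integrable lebesgue (\<lambda>x. (cmod (u x))\<^sup>2)"

definition weak_partial :: "(R3 \<Rightarrow> complex) \<Rightarrow> 3 \<Rightarrow> (R3 \<Rightarrow> complex) \<Rightarrow> bool" where
  "weak_partial u i g \<longleftrightarrow> (\<forall>\<phi>. test_fun \<phi> \<longrightarrow>
     (\<integral>x. u x * complex_of_real (pd i \<phi> x) \<partial>lebesgue) =
     - (\<integral>x. g x * complex_of_real (\<phi> x) \<partial>lebesgue))"

definition H1 :: "(R3 \<Rightarrow> complex) set" where
  "H1 = {u. square_integrable u \<and>
     (\<forall>i. \<exists>g. square_integrable g \<and> weak_partial u i g)}"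

definition wgrad :: "(R3 \<Rightarrow> complex) \<Rightarrow> 3 \<Rightarrow> R3 \<Rightarrow> complex" where
  "wgrad u i = (SOME g. square_integrable g \<and> weak_partial u i g)"

definition kinetic :: "(R3 \<Rightarrow> complex) \<Rightarrow> real" where
  "kinetic u = (\<integral>x. (\<Sum>i\<in>UNIV. (cmod (wgrad u i x))\<^sup>2) \<partial>lebesgue)"

definition L2sq :: "(R3 \<Rightarrow> complex) \<Rightarrow> real" where
  "L2sq u = (\<integral>x. (cmod (u x))\<^sup>2 \<partial>lebesgue)"

definition Dcoul :: "(R3 \<Rightarrow> complex) \<Rightarrow> real" where
  "Dcoul u = (\<integral>x. (\<integral>y. (cmod (u x))\<^sup>2 * (cmod (u y))\<^sup>2 / dist x y \<partial>lebesgue) \<partial>lebesgue)"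

definition Lpow :: "real \<Rightarrow> (R3 \<Rightarrow> complex) \<Rightarrow> real" where
  "Lpow p u = (\<integral>x. (cmod (u x)) powr p \<partial>lebesgue)"

definition energy :: "real \<Rightarrow> real \<Rightarrow> (R3 \<Rightarrow> complex) \<Rightarrow> real" where
  "energy C \<alpha> u = 1/2 * kinetic u + 1/4 * Dcoul u - C / (2*\<alpha>+2) * Lpow (2*\<alpha>+2) u"

definition Sigma_M :: "real \<Rightarrow> (R3 \<Rightarrow> complex) set" where
  "Sigma_M M = {u \<in> H1. L2sq u = M}"

definition I_M :: "real \<Rightarrow> real \<Rightarrow> real \<Rightarrow> real" where
  "I_M C \<alpha> M = Inf (energy C \<alpha> ` Sigma_M M)"

definition is_minimizer :: "real \<Rightarrow> real \<Rightarrow> real \<Rightarrow> (R3 \<Rightarrow> complex) \<Rightarrow> bool" where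
  "is_minimizer C \<alpha> M u \<longleftrightarrow> u \<in> Sigma_M M \<and> (\<forall>v\<in>Sigma_M M. energy C \<alpha> u \<le> energy C \<alpha> v)"

end

theory Submission
  imports Defs "HOL-Computational_Algebra.Polynomial"
begin

text \<open>
  The dilations \<open>u\<^sub>s(x) = s\<^bsup>3/2\<^esup> u(s x)\<close>, \<open>s > 0\<close>, preserve the \<open>L\<^sup>2\<close> mass
  and scale the kinetic, Coulomb and nonlinear terms of the energy by \<open>s\<^sup>2\<close>, \<open>s\<close>
  and \<open>s\<^bsup>3\<alpha>\<^esup>\<close>. Through a minimizer this gives a differentiable function of \<open>s\<close>
  with a minimum at \<open>s = 1\<close>, and its vanishing derivative there is the identity. The kinetic energy is defined through a chosen weak gradient, so its
  scaling law needs uniqueness of weak derivatives almost everywhere; this follows by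
  testing against smooth approximations of indicators of boxes, built from \<open>exp (-1/t)\<close>.
\<close>

section \<open>Smooth functions of one real variable\<close>

definition differentiable_upto :: "nat \<Rightarrow> (real \<Rightarrow> real) \<Rightarrow> bool" where
  "differentiable_upto n f \<longleftrightarrow> (\<forall>k<n. \<forall>x. (deriv ^^ k) f differentiable (at x))"

definition smooth_real :: "(real \<Rightarrow> real) \<Rightarrow> bool" where
  "smooth_real f \<longleftrightarrow> (\<forall>n. differentiable_upto n f)"

lemma differentiable_upto_0 [simp]: "differentiable_upto 0 f"
  by (simp add: differentiable_upto_def)

lemma differentiable_upto_Suc:
  "differentiable_upto (Suc n) f \<longleftrightarrow> (\<forall>x. f differentiable (at x)) \<and> differentiable_upto n (deriv f)"
  unfolding differentiable_upto_def
  by (auto simp: less_Suc_eq_0_disj funpow_Suc_right simp del: funpow.simps)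

lemma differentiable_upto_SucD: "differentiable_upto (Suc n) f \<Longrightarrow> differentiable_upto n f"
  unfolding differentiable_upto_def by auto

lemma deriv_fun_add:
  fixes f g :: "real \<Rightarrow> real"
  assumes "\<And>x. f differentiable (at x)" "\<And>x. g differentiable (at x)"
  shows "deriv (\<lambda>x. f x + g x) = (\<lambda>x. deriv f x + deriv g x)"
  using assms by (intro ext DERIV_imp_deriv DERIV_add) (simp_all add: DERIV_deriv_iff_real_differentiable)

lemma deriv_fun_mult:
  fixes f g :: "real \<Rightarrow> real"
  assumes "\<And>x. f differentiable (at x)" "\<And>x. g differentiable (at x)"
  shows "deriv (\<lambda>x. f x * g x) = (\<lambda>x. deriv f x * g x + f x * deriv g x)"
proof (rule ext, rule DERIV_imp_deriv)
  fix x
  have "(f has_real_derivative deriv f x) (at x)" "(g has_real_derivative deriv g x) (at x)"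
    using assms by (simp_all add: DERIV_deriv_iff_real_differentiable)
  from DERIV_mult[OF this]
  show "((\<lambda>x. f x * g x) has_real_derivative deriv f x * g x + f x * deriv g x) (at x)"
    by (simp add: mult.commute)
qed

lemma differentiable_upto_add:
  "differentiable_upto n f \<Longrightarrow> differentiable_upto n g \<Longrightarrow> differentiable_upto n (\<lambda>x. f x + g x)"
proof (induction n arbitrary: f g)
  case (Suc n)
  then show ?case
    by (auto simp: differentiable_upto_Suc deriv_fun_add)
qed simp

lemma differentiable_upto_const: "differentiable_upto n (\<lambda>x. c)"
  by (induction n arbitrary: c) (simp_all add: differentiable_upto_Suc)

lemma differentiable_upto_mult:
  "differentiable_upto n f \<Longrightarrow> differentiable_upto n g \<Longrightarrow> differentiable_upto n (\<lambda>x. f x * g x)"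
proof (induction n arbitrary: f g)
  case (Suc n)
  from Suc.prems have df: "\<And>x. f differentiable (at x)" and dg: "\<And>x. g differentiable (at x)"
    and f': "differentiable_upto n (deriv f)" and g': "differentiable_upto n (deriv g)"
    by (auto simp: differentiable_upto_Suc)
  have "differentiable_upto n f" "differentiable_upto n g"
    using Suc.prems differentiable_upto_SucD by auto
  then have "differentiable_upto n (\<lambda>x. deriv f x * g x + f x * deriv g x)"
    using Suc.IH f' g' by (intro differentiable_upto_add) auto
  then show ?case
    using df dg by (auto simp: differentiable_upto_Suc deriv_fun_mult)
qed simp

lemma differentiable_upto_affine:
  "differentiable_upto n f \<Longrightarrow> differentiable_upto n (\<lambda>x. f (c * x + d))"
proof (induction n arbitrary: f)
  case (Suc n)
  from Suc.prems have df: "\<And>x. f differentiable (at x)" and f': "differentiable_upto n (deriv f)"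
    by (auto simp: differentiable_upto_Suc)
  have D: "((\<lambda>x. f (c * x + d)) has_real_derivative c * deriv f (c * x + d)) (at x)" for x
  proof -
    have "(f has_real_derivative deriv f (c * x + d)) (at (c * x + d))"
      using df by (simp add: DERIV_deriv_iff_real_differentiable)
    then have "((\<lambda>x. f (c * x + d)) has_real_derivative deriv f (c * x + d) * c) (at x)"
      by (rule DERIV_chain2) (auto intro!: derivative_eq_intros)
    then show ?thesis by (simp add: mult.commute)
  qed
  then have "deriv (\<lambda>x. f (c * x + d)) = (\<lambda>x. c * deriv f (c * x + d))"
    by (intro ext DERIV_imp_deriv)
  moreover have "differentiable_upto n (\<lambda>x. c * deriv f (c * x + d))"
    by (intro differentiable_upto_mult differentiable_upto_const Suc.IH f')
  ultimately show ?case
    using D real_differentiable_def by (auto simp: differentiable_upto_Suc)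
qed simp

lemma smooth_real_deriv: "smooth_real f \<Longrightarrow> smooth_real (deriv f)"
  unfolding smooth_real_def using differentiable_upto_Suc by blast

lemma smooth_real_differentiable: "smooth_real f \<Longrightarrow> f differentiable (at x)"
  unfolding smooth_real_def using differentiable_upto_Suc by blast

lemma smooth_real_funpow_deriv: "smooth_real f \<Longrightarrow> smooth_real ((deriv ^^ k) f)"
  by (induction k) (auto intro: smooth_real_deriv)

lemma smooth_real_add: "smooth_real f \<Longrightarrow> smooth_real g \<Longrightarrow> smooth_real (\<lambda>x. f x + g x)"
  and smooth_real_mult: "smooth_real f \<Longrightarrow> smooth_real g \<Longrightarrow> smooth_real (\<lambda>x. f x * g x)"
  and smooth_real_const: "smooth_real (\<lambda>x. c)"
  and smooth_real_affine: "smooth_real f \<Longrightarrow> smooth_real (\<lambda>x. f (c * x + d))"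
  unfolding smooth_real_def
  by (auto intro: differentiable_upto_add differentiable_upto_mult differentiable_upto_const
      differentiable_upto_affine)

lemma smooth_real_power: "smooth_real f \<Longrightarrow> smooth_real (\<lambda>x. f x ^ m)"
  by (induction m) (auto intro: smooth_real_mult smooth_real_const)

text \<open>Every derivative of \<open>exp (-1/t)\<close>, continued by \<open>0\<close> on \<open>t \<le> 0\<close>, has this shape.\<close>

definition exp_inv_poly :: "real poly \<Rightarrow> real \<Rightarrow> real" where
  "exp_inv_poly p t = (if t > 0 then poly p (1/t) * exp (-1/t) else 0)"

definition exp_inv_poly_deriv :: "real poly \<Rightarrow> real poly" where
  "exp_inv_poly_deriv p = [:0, 0, 1:] * (p - pderiv p)"

lemma tendsto_poly_times_exp_neg_at_top:
  fixes r :: "real poly"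
  shows "((\<lambda>s. poly r s * exp (- s)) \<longlongrightarrow> 0) at_top"
proof -
  have "((\<lambda>s. \<Sum>i\<le>degree r. coeff r i * (s ^ i / exp s)) \<longlongrightarrow> (\<Sum>i\<le>degree r. coeff r i * 0)) at_top"
    by (intro tendsto_sum tendsto_mult tendsto_const tendsto_power_div_exp_0)
  moreover have "(\<Sum>i\<le>degree r. coeff r i * (s ^ i / exp s)) = poly r s * exp (- s)" for s
    by (simp add: poly_altdef exp_minus divide_inverse sum_distrib_right mult.assoc)
  ultimately show ?thesis by simp
qed

lemma tendsto_poly_inverse_times_exp_at_right_0:
  fixes r :: "real poly"
  shows "((\<lambda>t. poly r (1/t) * exp (-1/t)) \<longlongrightarrow> 0) (at_right 0)"
  unfolding filterlim_at_right_to_top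
proof (rule Lim_transform_eventually[OF tendsto_poly_times_exp_neg_at_top[of r]])
  show "\<forall>\<^sub>F x in at_top. poly r x * exp (- x) = poly r (1 / inverse x) * exp (- 1 / inverse x)"
    using eventually_gt_at_top[of 0] by eventually_elim (simp add: divide_inverse)
qed

lemma exp_inv_poly_has_derivative_pos:
  assumes "x > 0"
  shows "(exp_inv_poly p has_real_derivative exp_inv_poly (exp_inv_poly_deriv p) x) (at x)"
proof -
  have "((\<lambda>t. poly p (1/t) * exp (-1/t)) has_real_derivative
      poly (pderiv p) (1/x) * (- 1 / x^2) * exp (-1/x) + poly p (1/x) * (exp (-1/x) * (1/x^2))) (at x)"
    using assms by (auto intro!: derivative_eq_intros DERIV_chain2[OF poly_DERIV]
        simp: power2_eq_square field_simps)
  moreover have "poly (pderiv p) (1/x) * (- 1 / x^2) * exp (-1/x) + poly p (1/x) * (exp (-1/x) * (1/x^2))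
      = exp_inv_poly (exp_inv_poly_deriv p) x"
    using assms by (simp add: exp_inv_poly_def exp_inv_poly_deriv_def power2_eq_square field_simps)
  ultimately have "((\<lambda>t. poly p (1/t) * exp (-1/t)) has_real_derivative
      exp_inv_poly (exp_inv_poly_deriv p) x) (at x)"
    by simp
  then show ?thesis
    by (rule has_field_derivative_transform_within_open[where S="{0<..}"])
      (use assms in \<open>simp_all add: exp_inv_poly_def\<close>)
qed

lemma exp_inv_poly_has_derivative_0:
  "(exp_inv_poly p has_real_derivative exp_inv_poly (exp_inv_poly_deriv p) 0) (at 0)"
proof -
  have left: "((\<lambda>y. (exp_inv_poly p y - exp_inv_poly p 0) / (y - 0)) \<longlongrightarrow> 0) (at_left 0)"
    by (rule tendsto_eventually)
      (auto simp: eventually_at_left_field exp_inv_poly_def intro!: exI[of _ "-1"])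
  have right: "((\<lambda>y. (exp_inv_poly p y - exp_inv_poly p 0) / (y - 0)) \<longlongrightarrow> 0) (at_right 0)"
  proof (rule Lim_transform_eventually[OF tendsto_poly_inverse_times_exp_at_right_0[of "[:0, 1:] * p"]])
    show "\<forall>\<^sub>F t in at_right 0.
        poly ([:0, 1:] * p) (1/t) * exp (-1/t) = (exp_inv_poly p t - exp_inv_poly p 0) / (t - 0)"
      by (auto simp: eventually_at_right_field exp_inv_poly_def intro!: exI[of _ 1])
  qed
  show ?thesis
    using filterlim_split_at[OF left right] by (simp add: has_field_derivative_iff exp_inv_poly_def)
qed

lemma exp_inv_poly_has_derivative:
  "(exp_inv_poly p has_real_derivative exp_inv_poly (exp_inv_poly_deriv p) x) (at x)"
proof -
  consider "x > 0" | "x < 0" | "x = 0" by linarith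
  then show ?thesis
  proof cases
    case 2
    have "((\<lambda>t. 0) has_real_derivative exp_inv_poly (exp_inv_poly_deriv p) x) (at x)"
      using 2 by (simp add: exp_inv_poly_def)
    then show ?thesis
      by (rule has_field_derivative_transform_within_open[where S="{..<0}"])
        (use 2 in \<open>simp_all add: exp_inv_poly_def\<close>)
  qed (simp_all add: exp_inv_poly_has_derivative_pos exp_inv_poly_has_derivative_0)
qed

lemma smooth_real_exp_inv_poly: "smooth_real (exp_inv_poly p)"
proof -
  have "differentiable_upto n (exp_inv_poly p)" for n
  proof (induction n arbitrary: p)
    case (Suc n)
    have "deriv (exp_inv_poly p) = exp_inv_poly (exp_inv_poly_deriv p)"
      by (intro ext DERIV_imp_deriv exp_inv_poly_has_derivative)
    then show ?case
      using Suc exp_inv_poly_has_derivative real_differentiable_def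
      by (auto simp: differentiable_upto_Suc)
  qed simp
  then show ?thesis by (simp add: smooth_real_def)
qed

lemma exp_inv_poly_1_pos: "t > 0 \<Longrightarrow> exp_inv_poly 1 t > 0"
  and exp_inv_poly_1_eq_0: "t \<le> 0 \<Longrightarrow> exp_inv_poly 1 t = 0"
  and exp_inv_poly_1_bounds: "0 \<le> exp_inv_poly 1 t" "exp_inv_poly 1 t \<le> 1"
  by (auto simp: exp_inv_poly_def)

section \<open>Smooth approximations of indicators of boxes\<close>

definition interval_bump :: "real \<Rightarrow> real \<Rightarrow> real \<Rightarrow> real" where
  "interval_bump a b t = exp_inv_poly 1 (t - a) * exp_inv_poly 1 (b - t)"

definition interval_approx :: "nat \<Rightarrow> real \<Rightarrow> real \<Rightarrow> real \<Rightarrow> real" where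
  "interval_approx n a b t = 1 - (1 - interval_bump a b t / 2) ^ n"

lemma smooth_real_interval_bump: "smooth_real (interval_bump a b)"
proof -
  have "smooth_real (\<lambda>t. exp_inv_poly 1 (1 * t + - a) * exp_inv_poly 1 ((-1) * t + b))"
    by (intro smooth_real_mult smooth_real_affine smooth_real_exp_inv_poly)
  then show ?thesis by (simp add: interval_bump_def[abs_def])
qed

lemma interval_bump_eq_0: "\<not> (a < t \<and> t < b) \<Longrightarrow> interval_bump a b t = 0"
  by (auto simp: interval_bump_def exp_inv_poly_1_eq_0)

lemma interval_bump_pos: "a < t \<Longrightarrow> t < b \<Longrightarrow> interval_bump a b t > 0"
  by (simp add: interval_bump_def exp_inv_poly_1_pos)

lemma interval_bump_bounds: "0 \<le> interval_bump a b t" "interval_bump a b t \<le> 1"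
  unfolding interval_bump_def using exp_inv_poly_1_bounds
  by (auto intro: mult_nonneg_nonneg mult_le_one)

lemma smooth_real_interval_approx: "smooth_real (interval_approx n a b)"
proof -
  have "smooth_real (\<lambda>t. 1 + (-1) * (1 + (-1/2) * interval_bump a b t) ^ n)"
    by (intro smooth_real_add smooth_real_mult smooth_real_power smooth_real_const
        smooth_real_interval_bump)
  then show ?thesis by (simp add: interval_approx_def[abs_def])
qed

lemma interval_approx_eq_0: "t \<notin> {a..b} \<Longrightarrow> interval_approx n a b t = 0"
  by (auto simp: interval_approx_def interval_bump_eq_0)

lemma interval_approx_bounds: "0 \<le> interval_approx n a b t" "interval_approx n a b t \<le> 1"
proof -
  have "0 \<le> 1 - interval_bump a b t / 2" "1 - interval_bump a b t / 2 \<le> 1"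
    using interval_bump_bounds[of a b t] by auto
  then have "0 \<le> (1 - interval_bump a b t / 2) ^ n" "(1 - interval_bump a b t / 2) ^ n \<le> 1"
    by (auto intro: power_le_one)
  then show "0 \<le> interval_approx n a b t" "interval_approx n a b t \<le> 1"
    by (auto simp: interval_approx_def)
qed

lemma interval_approx_tendsto:
  "(\<lambda>n. interval_approx n a b t) \<longlonglongrightarrow> (if a < t \<and> t < b then 1 else 0)"
proof (cases "a < t \<and> t < b")
  case True
  then have "0 \<le> 1 - interval_bump a b t / 2" "1 - interval_bump a b t / 2 < 1"
    using interval_bump_bounds[of a b t] interval_bump_pos[of a t b] by auto
  then have "(\<lambda>n. (1 - interval_bump a b t / 2) ^ n) \<longlonglongrightarrow> 0"
    by (intro LIMSEQ_power_zero) auto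
  then have "(\<lambda>n. 1 - (1 - interval_bump a b t / 2) ^ n) \<longlonglongrightarrow> 1 - 0"
    by (intro tendsto_diff tendsto_const)
  then show ?thesis using True by (simp add: interval_approx_def)
next
  case False
  then have "interval_approx n a b t = 0" for n
    by (simp add: interval_approx_def interval_bump_eq_0)
  with False show ?thesis by (simp del: de_Morgan_conj)
qed

definition coord_prod :: "(3 \<Rightarrow> real \<Rightarrow> real) \<Rightarrow> R3 \<Rightarrow> real" where
  "coord_prod a x = (\<Prod>i\<in>UNIV. a i (x $ i))"

lemma coord_prod_has_derivative:
  assumes "\<And>i t. a i differentiable (at t)"
  shows "(coord_prod a has_derivative
     (\<lambda>h. \<Sum>i\<in>UNIV. h $ i * deriv (a i) (x $ i) * (\<Prod>j\<in>UNIV - {i}. a j (x $ j)))) (at x)"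
proof -
  have "((\<lambda>x. a i (x $ i)) has_derivative (\<lambda>h. h $ i * deriv (a i) (x $ i))) (at x)" for i
  proof -
    have "(a i has_derivative (\<lambda>h. h * deriv (a i) (x $ i))) (at (x $ i))"
      using assms[of i "x $ i"]
      by (simp add: DERIV_deriv_iff_real_differentiable[symmetric] has_field_derivative_def
          mult.commute[of _ "deriv (a i) (x $ i)"])
    then show ?thesis
      by (rule has_derivative_compose[OF bounded_linear_imp_has_derivative[OF bounded_linear_vec_nth]])
  qed
  then show ?thesis
    unfolding coord_prod_def
    by (rule has_derivative_prod[where f="\<lambda>i x. a i (x $ i)" and I=UNIV and S=UNIV, simplified])
qed

lemma coord_prod_differentiable:
  "(\<And>i t. a i differentiable (at t)) \<Longrightarrow> coord_prod a differentiable (at x)"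
  using coord_prod_has_derivative unfolding differentiable_def by blast

lemma pd_coord_prod:
  assumes "\<And>i t. a i differentiable (at t)"
  shows "pd j (coord_prod a) = coord_prod (a(j := deriv (a j)))"
proof (rule ext)
  fix x
  have "pd j (coord_prod a) x
      = (\<Sum>i\<in>UNIV. axis j 1 $ i * deriv (a i) (x $ i) * (\<Prod>k\<in>UNIV - {i}. a k (x $ k)))"
    unfolding pd_def frechet_derivative_at[OF coord_prod_has_derivative[OF assms], symmetric] ..
  also have "\<dots> = deriv (a j) (x $ j) * (\<Prod>k\<in>UNIV - {j}. a k (x $ k))"
    by (subst sum.remove[of _ j]) (auto simp: axis_def)
  also have "\<dots> = coord_prod (a(j := deriv (a j))) x"
    unfolding coord_prod_def by (subst prod.remove[of _ j]) (auto intro!: prod.cong)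
  finally show "pd j (coord_prod a) x = coord_prod (a(j := deriv (a j))) x" .
qed

lemma pds_coord_prod:
  assumes "\<And>i. smooth_real (a i)"
  shows "pds is (coord_prod a) = coord_prod (\<lambda>i. (deriv ^^ count_list is i) (a i))"
proof (induction "is")
  case (Cons j "is")
  have "\<And>i t. (deriv ^^ count_list is i) (a i) differentiable (at t)"
    using smooth_real_differentiable smooth_real_funpow_deriv assms by blast
  from pd_coord_prod[OF this] show ?case
    using Cons by (auto simp: fun_upd_def intro!: arg_cong[where f=coord_prod])
qed simp

lemma smooth_fun_coord_prod:
  assumes "\<And>i. smooth_real (a i)"
  shows "smooth_fun (coord_prod a)"
  unfolding smooth_fun_def pds_coord_prod[OF assms]
  using smooth_real_differentiable smooth_real_funpow_deriv assms
  by (blast intro: coord_prod_differentiable)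

lemma test_fun_coord_prod:
  assumes "\<And>i. smooth_real (a i)" and "\<And>i t. t \<notin> {l i..u i} \<Longrightarrow> a i t = 0"
  shows "test_fun (coord_prod a)"
proof -
  have "{x. coord_prod a x \<noteq> 0} \<subseteq> cbox (\<chi> i. l i) (\<chi> i. u i)"
    using assms(2) by (fastforce simp: coord_prod_def mem_box_cart)
  then have "closure {x. coord_prod a x \<noteq> 0} \<subseteq> cbox (\<chi> i. l i) (\<chi> i. u i)"
    by (rule closure_minimal) (rule closed_cbox)
  then have "compact (closure {x. coord_prod a x \<noteq> 0})"
    by (meson bounded_cbox bounded_subset closed_closure compact_eq_bounded_closed)
  then show ?thesis
    using smooth_fun_coord_prod[OF assms(1)] by (simp add: test_fun_def)
qed

definition box_approx :: "nat \<Rightarrow> R3 \<Rightarrow> R3 \<Rightarrow> R3 \<Rightarrow> real" where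
  "box_approx n a b = coord_prod (\<lambda>i. interval_approx n (a $ i) (b $ i))"

lemma test_fun_box_approx: "test_fun (box_approx n a b)"
  unfolding box_approx_def
  by (rule test_fun_coord_prod[OF smooth_real_interval_approx interval_approx_eq_0])

lemma continuous_on_box_approx: "continuous_on UNIV (box_approx n a b)"
proof -
  have "box_approx n a b differentiable (at x)" for x
    unfolding box_approx_def
    by (rule coord_prod_differentiable) (rule smooth_real_differentiable[OF smooth_real_interval_approx])
  then show ?thesis
    by (simp add: continuous_at_imp_continuous_on differentiable_imp_continuous_within)
qed

lemma box_approx_tendsto_indicator: "(\<lambda>n. box_approx n a b x) \<longlonglongrightarrow> indicator (box a b) x"
proof -
  have "(\<lambda>n. \<Prod>i\<in>UNIV. interval_approx n (a $ i) (b $ i) (x $ i)) \<longlonglongrightarrow>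
      (\<Prod>i\<in>UNIV. (if a $ i < x $ i \<and> x $ i < b $ i then 1 else 0))"
    by (intro tendsto_prod interval_approx_tendsto)
  moreover have "(\<Prod>i\<in>UNIV. (if a $ i < x $ i \<and> x $ i < b $ i then 1 else 0 :: real))
      = indicator (box a b) x"
    by (auto simp: mem_box_cart indicator_def prod_zero_iff)
  ultimately show ?thesis by (simp add: box_approx_def coord_prod_def)
qed

lemma abs_box_approx_le_indicator: "\<bar>box_approx n a b x\<bar> \<le> indicator (cbox a b) x"
proof (cases "x \<in> cbox a b")
  case True
  have "\<bar>box_approx n a b x\<bar> = (\<Prod>i\<in>UNIV. \<bar>interval_approx n (a $ i) (b $ i) (x $ i)\<bar>)"
    by (simp add: box_approx_def coord_prod_def abs_prod)
  also have "\<dots> \<le> 1"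
    using interval_approx_bounds by (intro prod_le_1) auto
  finally show ?thesis using True by simp
next
  case False
  then obtain i where "x $ i \<notin> {a $ i..b $ i}" by (auto simp: mem_box_cart)
  then have "interval_approx n (a $ i) (b $ i) (x $ i) = 0" by (rule interval_approx_eq_0)
  then have "box_approx n a b x = 0"
    unfolding box_approx_def coord_prod_def by (meson UNIV_I finite prod_zero)
  then show ?thesis by simp
qed

section \<open>Functions with vanishing integrals over all boxes\<close>

lemma sigma_finite_measure_lebesgue: "sigma_finite_measure (lebesgue :: 'a::euclidean_space measure)"
proof -
  from sigma_finite_lborel obtain A :: "'a set set" where A: "countable A" "A \<subseteq> sets lborel"
    "\<Union>A = space lborel" "\<forall>a\<in>A. emeasure lborel a \<noteq> \<infinity>"
    unfolding sigma_finite_measure_def by blast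
  then have "A \<subseteq> sets lebesgue" "\<forall>a\<in>A. emeasure lebesgue a \<noteq> \<infinity>"
    by (auto simp: subset_eq)
  with A show ?thesis
    unfolding sigma_finite_measure_def by auto
qed

lemma AE_indicator_box_scaleR_eq_0:
  fixes f :: "'a::euclidean_space \<Rightarrow> 'b::{banach, second_countable_topology}"
  assumes int: "\<And>a b. integrable lebesgue (\<lambda>x. indicator (box a b) x *\<^sub>R f x)"
    and zero: "\<And>a b. (LINT x|lebesgue. indicator (box a b) x *\<^sub>R f x) = 0"
  shows "AE x in lebesgue. indicator (box c d) x *\<^sub>R f x = 0"
proof -
  define g where "g x = indicator (box c d) x *\<^sub>R f x" for x
  have g: "integrable lebesgue g" unfolding g_def by (rule int)
  have g_indicator: "indicator A x *\<^sub>R g x = indicator (A \<inter> box c d) x *\<^sub>R f x" for A x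
    by (simp add: g_def indicator_inter_arith)
  text \<open>The boxes form an intersection-stable generator of the Borel sets, and the sets on
    which \<open>g\<close> integrates to \<open>0\<close> form a Dynkin system.\<close>
  have sets_lborel_eq: "sets (lborel :: 'a measure) = sigma_sets UNIV (range (\<lambda>(a, b). box a b))"
    by (simp add: borel_eq_box sets_measure_of)
  have borel_zero: "(LINT x|lebesgue. indicator A x *\<^sub>R g x) = 0" if "A \<in> sets lborel" for A
  proof -
    have "Int_stable (range (\<lambda>(a, b). box a b :: 'a set))"
      by (auto simp: Int_stable_def box_Int_box)
    moreover have "range (\<lambda>(a, b). box a b :: 'a set) \<subseteq> Pow UNIV" by auto
    moreover have "A \<in> sigma_sets UNIV (range (\<lambda>(a, b). box a b))"
      using that sets_lborel_eq by simp
    ultimately show ?thesis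
    proof (induction rule: sigma_sets_induct_disjoint)
      case (basic A)
      then show ?case by (auto simp: g_indicator box_Int_box zero)
    next
      case empty
      show ?case by simp
    next
      case (compl A)
      then have "A \<in> sets lborel" using sets_lborel_eq by simp
      then have "A \<in> sets lebesgue" by simp
      moreover have "(\<lambda>x. indicator (UNIV - A) x *\<^sub>R g x) = (\<lambda>x. g x - indicator A x *\<^sub>R g x)"
        by (auto simp: fun_eq_iff split: split_indicator)
      ultimately have "(LINT x|lebesgue. indicator (UNIV - A) x *\<^sub>R g x)
          = (LINT x|lebesgue. g x) - (LINT x|lebesgue. indicator A x *\<^sub>R g x)"
        using g by (simp add: integrable_mult_indicator)
      then show ?case
        using compl.IH zero[of c d] by (simp add: g_def)
    next
      case (union A)
      have "A i \<in> sets lborel" for i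
        using union.hyps(2) sets_lborel_eq by auto
      then have A: "A i \<in> sets lebesgue" for i by simp
      have partial_sums: "(\<Sum>i<n. indicator (A i) x *\<^sub>R g x) = indicator (\<Union>i<n. A i) x *\<^sub>R g x"
        for n x
        using union.hyps(1)
        by (subst indicator_UN_disjoint) (auto simp: disjoint_family_on_def scaleR_sum_left)
      have "(\<lambda>n. LINT x|lebesgue. (\<Sum>i<n. indicator (A i) x *\<^sub>R g x))
          \<longlonglongrightarrow> (LINT x|lebesgue. indicator (\<Union>i. A i) x *\<^sub>R g x)"
      proof (rule integral_dominated_convergence[where w="\<lambda>x. norm (g x)"])
        show "AE x in lebesgue. (\<lambda>n. \<Sum>i<n. indicator (A i) x *\<^sub>R g x)
            \<longlonglongrightarrow> indicator (\<Union>i. A i) x *\<^sub>R g x"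
          unfolding partial_sums by (intro AE_I2 tendsto_scaleR LIMSEQ_indicator_UN tendsto_const)
        show "AE x in lebesgue. norm (\<Sum>i<n. indicator (A i) x *\<^sub>R g x) \<le> norm (g x)" for n
          unfolding partial_sums by (intro AE_I2) (auto split: split_indicator)
        show "(\<lambda>x. \<Sum>i<n. indicator (A i) x *\<^sub>R g x) \<in> borel_measurable lebesgue" for n
          using A g by (intro borel_measurable_sum borel_measurable_scaleR borel_measurable_indicator) auto
      qed (use A g in auto)
      moreover have "(LINT x|lebesgue. (\<Sum>i<n. indicator (A i) x *\<^sub>R g x)) = 0" for n
        using union.IH integrable_mult_indicator[OF A g] by (subst Bochner_Integration.integral_sum) auto
      ultimately show ?case by (simp add: LIMSEQ_const_iff)
    qed
  qed
  have "AE x in lebesgue. g x = 0"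
  proof (rule sigma_finite_measure.density_zero[OF sigma_finite_measure_lebesgue g])
    fix S :: "'a set" assume S: "S \<in> sets lebesgue"
    have main_part_iff: "x \<in> S \<longleftrightarrow> x \<in> main_part lborel S" if "x \<notin> null_part lborel S" for x
      using that main_part_null_part_Un[OF S] main_part_null_part_Int[OF S] by blast
    have ae: "AE x in lebesgue. indicator S x *\<^sub>R g x = indicator (main_part lborel S) x *\<^sub>R g x"
      using AE_notin_null_part[OF S] unfolding AE_completion_iff
      by eventually_elim (simp add: main_part_iff indicator_def)
    have "set_lebesgue_integral lebesgue S g
        = (LINT x|lebesgue. indicator (main_part lborel S) x *\<^sub>R g x)"
      unfolding set_lebesgue_integral_def
    proof (rule integral_cong_AE)
      have "main_part lborel S \<in> sets lebesgue" using main_part_sets[OF S] by simp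
      then show "(\<lambda>x. indicator (main_part lborel S) x *\<^sub>R g x) \<in> borel_measurable lebesgue"
        using g by (intro borel_measurable_scaleR borel_measurable_indicator) auto
      show "(\<lambda>x. indicator S x *\<^sub>R g x) \<in> borel_measurable lebesgue"
        using S g by (intro borel_measurable_scaleR borel_measurable_indicator) auto
    qed (rule ae)
    also have "\<dots> = 0"
      using main_part_sets[OF S] by (rule borel_zero)
    finally show "set_lebesgue_integral lebesgue S g = 0" .
  qed
  then show ?thesis by (simp add: g_def)
qed

lemma AE_eq_0_if_box_integrals_eq_0:
  fixes f :: "'a::euclidean_space \<Rightarrow> 'b::{banach, second_countable_topology}"
  assumes "\<And>a b. integrable lebesgue (\<lambda>x. indicator (box a b) x *\<^sub>R f x)"
    and "\<And>a b. (LINT x|lebesgue. indicator (box a b) x *\<^sub>R f x) = 0"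
  shows "AE x in lebesgue. f x = 0"
proof -
  have "AE x in lebesgue. \<forall>n::nat. indicator (box (- real n *\<^sub>R One) (real n *\<^sub>R One)) x *\<^sub>R f x = 0"
    unfolding AE_all_countable using AE_indicator_box_scaleR_eq_0[OF assms] by blast
  then show ?thesis
  proof eventually_elim
    case (elim x)
    obtain n :: nat where n: "norm x < real n" using reals_Archimedean2 by blast
    have "x \<in> box (- real n *\<^sub>R One) (real n *\<^sub>R One)"
      using n Basis_le_norm[of _ x] by (force simp: mem_box abs_le_iff)
    then show ?case using elim[rule_format, of n] by simp
  qed
qed

lemma square_integrable_integrable_on_cbox:
  assumes "square_integrable g"
  shows "integrable lebesgue (\<lambda>x. cmod (g x) * indicator (cbox a b) x)"
proof (rule Bochner_Integration.integrable_bound)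
  have "integrable lebesgue (indicator (cbox a b) :: R3 \<Rightarrow> real)"
    using emeasure_lborel_cbox_finite[of a b] by (simp add: integrable_indicator_iff)
  then show "integrable lebesgue (\<lambda>x. indicator (cbox a b) x + (cmod (g x))\<^sup>2)"
    using assms by (auto simp: square_integrable_def)
  show "(\<lambda>x. cmod (g x) * indicator (cbox a b) x) \<in> borel_measurable lebesgue"
    using assms unfolding square_integrable_def
    by (intro borel_measurable_times borel_measurable_norm borel_measurable_indicator) auto
  have "cmod (g x) \<le> 1 + (cmod (g x))\<^sup>2" for x
    using sum_power2_ge_zero[of "cmod (g x) - 1/2" 0] by (simp add: power2_eq_square algebra_simps)
  then show "AE x in lebesgue. norm (cmod (g x) * indicator (cbox a b) x)
      \<le> norm (indicator (cbox a b) x + (cmod (g x))\<^sup>2)"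
    by (intro AE_I2) (auto simp: indicator_def)
qed

lemma
  assumes "square_integrable g"
  shows tendsto_integral_box_approx: "(\<lambda>n. LINT x|lebesgue. g x * complex_of_real (box_approx n a b x))
      \<longlonglongrightarrow> (LINT x|lebesgue. indicator (box a b) x *\<^sub>R g x)"
    and integrable_indicator_box_scaleR: "integrable lebesgue (\<lambda>x. indicator (box a b) x *\<^sub>R g x)"
proof -
  have g: "g \<in> borel_measurable lebesgue" using assms by (auto simp: square_integrable_def)
  have "box_approx n a b \<in> borel_measurable lborel" for n
    using borel_measurable_continuous_onI[OF continuous_on_box_approx] by simp
  then have "box_approx n a b \<in> borel_measurable lebesgue" for n
    by (rule measurable_completion)
  then have meas: "(\<lambda>x. g x * complex_of_real (box_approx n a b x)) \<in> borel_measurable lebesgue" for n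
    using g by measurable
  have lim: "AE x in lebesgue. (\<lambda>n. g x * complex_of_real (box_approx n a b x))
      \<longlonglongrightarrow> indicator (box a b) x *\<^sub>R g x"
    using tendsto_mult[OF tendsto_const tendsto_of_real[OF box_approx_tendsto_indicator]]
    by (intro AE_I2) (simp add: scaleR_conv_of_real mult.commute)
  have bound: "AE x in lebesgue. norm (g x * complex_of_real (box_approx n a b x))
      \<le> cmod (g x) * indicator (cbox a b) x" for n
    using abs_box_approx_le_indicator[of n a b] by (intro AE_I2) (simp add: norm_mult mult_left_mono)
  have "(\<lambda>x. indicator (box a b) x *\<^sub>R g x) \<in> borel_measurable lebesgue"
    using g by (intro borel_measurable_scaleR borel_measurable_indicator) auto
  note dominated = this meas square_integrable_integrable_on_cbox[OF assms] lim bound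
  show "(\<lambda>n. LINT x|lebesgue. g x * complex_of_real (box_approx n a b x))
      \<longlonglongrightarrow> (LINT x|lebesgue. indicator (box a b) x *\<^sub>R g x)"
    by (rule integral_dominated_convergence[OF dominated])
  show "integrable lebesgue (\<lambda>x. indicator (box a b) x *\<^sub>R g x)"
    by (rule integrable_dominated_convergence[OF dominated])
qed

lemma weak_partial_unique:
  assumes g1: "square_integrable g1" "weak_partial u i g1"
    and g2: "square_integrable g2" "weak_partial u i g2"
  shows "AE x in lebesgue. g1 x = g2 x"
proof -
  have box_integrals_eq: "(LINT x|lebesgue. indicator (box a b) x *\<^sub>R g1 x)
      = (LINT x|lebesgue. indicator (box a b) x *\<^sub>R g2 x)" for a b
  proof -
    have "- (LINT x|lebesgue. g1 x * complex_of_real (box_approx n a b x))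
        = - (LINT x|lebesgue. g2 x * complex_of_real (box_approx n a b x))" for n
      using g1(2) g2(2) test_fun_box_approx[of n a b] unfolding weak_partial_def by metis
    then have "(\<lambda>n. LINT x|lebesgue. g2 x * complex_of_real (box_approx n a b x))
        \<longlonglongrightarrow> (LINT x|lebesgue. indicator (box a b) x *\<^sub>R g1 x)"
      using tendsto_integral_box_approx[OF g1(1), of a b] by simp
    then show ?thesis
      using tendsto_integral_box_approx[OF g2(1), of a b] by (rule LIMSEQ_unique)
  qed
  have "AE x in lebesgue. g1 x - g2 x = 0"
  proof (rule AE_eq_0_if_box_integrals_eq_0)
    fix a b
    have "(\<lambda>x. indicator (box a b) x *\<^sub>R (g1 x - g2 x))
        = (\<lambda>x. indicator (box a b) x *\<^sub>R g1 x - indicator (box a b) x *\<^sub>R g2 x)"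
      by (simp add: fun_eq_iff scaleR_diff_right)
    then show "integrable lebesgue (\<lambda>x. indicator (box a b) x *\<^sub>R (g1 x - g2 x))"
      and "(LINT x|lebesgue. indicator (box a b) x *\<^sub>R (g1 x - g2 x)) = 0"
      using integrable_indicator_box_scaleR[OF g1(1)] integrable_indicator_box_scaleR[OF g2(1)]
        box_integrals_eq[of a b] by simp_all
  qed
  then show ?thesis by simp
qed

section \<open>Dilations\<close>

lemma lebesgue_eq_density_distr_scaleR:
  assumes "s \<noteq> 0"
  shows "(lebesgue :: 'a::euclidean_space measure)
    = density (distr lebesgue lebesgue (\<lambda>x. s *\<^sub>R x)) (\<lambda>_. ennreal (\<bar>s\<bar> ^ DIM('a)))"
proof -
  have "(\<lambda>x::'a. 0 + (\<Sum>j\<in>Basis. (s * (x \<bullet> j)) *\<^sub>R j)) = (\<lambda>x. s *\<^sub>R x)"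
    unfolding scaleR_scaleR[symmetric] scaleR_sum_right[symmetric] euclidean_representation by simp
  then show ?thesis
    using lebesgue_affine_euclidean[of "\<lambda>_::'a. s" 0] assms by simp
qed

lemma
  fixes f :: "'a::euclidean_space \<Rightarrow> 'b::{banach, second_countable_topology}"
  assumes s: "s \<noteq> 0" and f: "integrable lebesgue f"
  shows integrable_comp_scaleR: "integrable lebesgue (\<lambda>x. f (s *\<^sub>R x))"
    and integral_comp_scaleR_integrable:
      "(LINT x|lebesgue. f (s *\<^sub>R x)) = (1 / \<bar>s\<bar> ^ DIM('a)) *\<^sub>R (LINT x|lebesgue. f x)"
proof -
  let ?D = "distr lebesgue lebesgue (\<lambda>x::'a. s *\<^sub>R x)"
  have fD: "f \<in> borel_measurable ?D" using f by simp
  have "integrable (density ?D (\<lambda>_. ennreal (\<bar>s\<bar> ^ DIM('a)))) f"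
    using lebesgue_eq_density_distr_scaleR[OF s] f by metis
  then have "integrable ?D (\<lambda>x. \<bar>s\<bar> ^ DIM('a) *\<^sub>R f x)"
    using fD by (subst (asm) integrable_density) auto
  then have "integrable ?D f"
    using s integrable_scaleR_right[of "1 / \<bar>s\<bar> ^ DIM('a)" ?D "\<lambda>x. \<bar>s\<bar> ^ DIM('a) *\<^sub>R f x"]
    by simp
  then show "integrable lebesgue (\<lambda>x. f (s *\<^sub>R x))"
    using integrable_distr_eq[OF lebesgue_measurable_scaling, of f s] f by auto
  have "(LINT x|lebesgue. f x) = integral\<^sup>L (density ?D (\<lambda>_. ennreal (\<bar>s\<bar> ^ DIM('a)))) f"
    using lebesgue_eq_density_distr_scaleR[OF s] by metis
  also have "\<dots> = \<bar>s\<bar> ^ DIM('a) *\<^sub>R integral\<^sup>L ?D f"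
    using fD by (subst integral_density) auto
  also have "integral\<^sup>L ?D f = (LINT x|lebesgue. f (s *\<^sub>R x))"
    using f by (intro integral_distr lebesgue_measurable_scaling) auto
  finally show "(LINT x|lebesgue. f (s *\<^sub>R x)) = (1 / \<bar>s\<bar> ^ DIM('a)) *\<^sub>R (LINT x|lebesgue. f x)"
    using s by simp
qed

lemma integrable_comp_scaleR_iff:
  fixes f :: "'a::euclidean_space \<Rightarrow> 'b::{banach, second_countable_topology}"
  assumes "s \<noteq> 0"
  shows "integrable lebesgue (\<lambda>x. f (s *\<^sub>R x)) \<longleftrightarrow> integrable lebesgue f"
  using integrable_comp_scaleR[OF assms, of f] integrable_comp_scaleR[of "1/s" "\<lambda>x. f (s *\<^sub>R x)"] assms
  by auto

lemma integral_comp_scaleR: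
  fixes f :: "'a::euclidean_space \<Rightarrow> 'b::{banach, second_countable_topology}"
  assumes "s \<noteq> 0"
  shows "(LINT x|lebesgue. f (s *\<^sub>R x)) = (1 / \<bar>s\<bar> ^ DIM('a)) *\<^sub>R (LINT x|lebesgue. f x)"
proof (cases "integrable lebesgue f")
  case True
  then show ?thesis by (rule integral_comp_scaleR_integrable[OF assms])
next
  case False
  then show ?thesis
    using integrable_comp_scaleR_iff[OF assms, of f] by (simp add: not_integrable_integral_eq)
qed

lemma
  fixes h :: "R3 \<Rightarrow> real"
  assumes "\<And>x. h differentiable (at x)"
  shows differentiable_mult_comp_scaleR: "(\<lambda>y. k * h (c *\<^sub>R y)) differentiable (at x)"
    and pd_mult_comp_scaleR: "pd j (\<lambda>y. k * h (c *\<^sub>R y)) = (\<lambda>y. k * c * pd j h (c *\<^sub>R y))"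
proof -
  have D: "((\<lambda>y. k * h (c *\<^sub>R y)) has_derivative
      (\<lambda>v. k * frechet_derivative h (at (c *\<^sub>R y)) (c *\<^sub>R v))) (at y)" for y
    using has_derivative_compose[OF bounded_linear_imp_has_derivative[OF bounded_linear_scaleR_right]
        frechet_derivative_works[THEN iffD1, OF assms]]
    by (rule has_derivative_mult_right)
  then show "(\<lambda>y. k * h (c *\<^sub>R y)) differentiable (at x)"
    unfolding differentiable_def by blast
  show "pd j (\<lambda>y. k * h (c *\<^sub>R y)) = (\<lambda>y. k * c * pd j h (c *\<^sub>R y))"
  proof
    fix y
    have "linear (frechet_derivative h (at (c *\<^sub>R y)))"
      using assms frechet_derivative_works has_derivative_linear by blast
    then show "pd j (\<lambda>y. k * h (c *\<^sub>R y)) y = k * c * pd j h (c *\<^sub>R y)"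
      unfolding pd_def frechet_derivative_at[OF D, symmetric] by (simp add: linear_scale)
  qed
qed

lemma pds_comp_scaleR:
  assumes "smooth_fun \<phi>"
  shows "pds is (\<lambda>y. \<phi> (c *\<^sub>R y)) = (\<lambda>y. c ^ length is * pds is \<phi> (c *\<^sub>R y))"
proof (induction "is")
  case (Cons j "is")
  have "\<And>x. pds is \<phi> differentiable (at x)"
    using assms by (simp add: smooth_fun_def)
  from pd_mult_comp_scaleR[OF this] show ?case
    using Cons by (simp add: mult.commute)
qed simp

lemma test_fun_comp_scaleR:
  assumes \<phi>: "test_fun \<phi>" and c: "c \<noteq> 0"
  shows "test_fun (\<lambda>y. \<phi> (c *\<^sub>R y))"
proof -
  have "smooth_fun \<phi>" using \<phi> by (simp add: test_fun_def)
  then have "smooth_fun (\<lambda>y. \<phi> (c *\<^sub>R y))"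
    unfolding smooth_fun_def pds_comp_scaleR[OF \<open>smooth_fun \<phi>\<close>]
    by (blast intro: differentiable_mult_comp_scaleR)
  moreover have "{y. \<phi> (c *\<^sub>R y) \<noteq> 0} = (\<lambda>x. (1/c) *\<^sub>R x) ` {x. \<phi> x \<noteq> 0}"
    using c by (auto intro!: image_eqI[where x="c *\<^sub>R y" for y])
  then have "closure {y. \<phi> (c *\<^sub>R y) \<noteq> 0} = (\<lambda>x. (1/c) *\<^sub>R x) ` closure {x. \<phi> x \<noteq> 0}"
    by (simp add: closure_scaleR)
  moreover have "compact ((\<lambda>x. (1/c) *\<^sub>R x) ` closure {x. \<phi> x \<noteq> 0})"
    using \<phi> by (intro compact_scaling) (simp add: test_fun_def)
  ultimately show ?thesis by (simp add: test_fun_def)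
qed

definition dilation :: "real \<Rightarrow> (R3 \<Rightarrow> complex) \<Rightarrow> R3 \<Rightarrow> complex" where
  "dilation s u x = complex_of_real (s powr (3/2)) * u (s *\<^sub>R x)"

lemma weak_partial_dilation:
  assumes s: "s > 0" and w: "weak_partial u i g"
  shows "weak_partial (dilation s u) i (\<lambda>x. complex_of_real s * dilation s g x)"
  unfolding weak_partial_def
proof (intro allI impI)
  fix \<phi> assume \<phi>: "test_fun \<phi>"
  define \<psi> where "\<psi> y = \<phi> ((1/s) *\<^sub>R y)" for y
  define K where "K = complex_of_real (s powr (3/2) * s)"
  have \<psi>_test: "test_fun \<psi>"
    unfolding \<psi>_def using test_fun_comp_scaleR[OF \<phi>, of "1/s"] s by simp
  have "pd i \<psi> z = (1/s) * pd i \<phi> ((1/s) *\<^sub>R z)" for z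
    using fun_cong[OF pds_comp_scaleR[of \<phi> "[i]" "1/s"], of z] \<phi>
    by (simp add: \<psi>_def[abs_def] test_fun_def)
  then have pd_\<phi>: "pd i \<phi> x = s * pd i \<psi> (s *\<^sub>R x)" for x
    using s by simp
  have \<phi>_eq: "\<phi> x = \<psi> (s *\<^sub>R x)" for x
    using s by (simp add: \<psi>_def)
  have "(LINT x|lebesgue. dilation s u x * complex_of_real (pd i \<phi> x))
      = K * (LINT x|lebesgue. (\<lambda>z. u z * complex_of_real (pd i \<psi> z)) (s *\<^sub>R x))"
    by (subst integral_mult_right_zero[symmetric]) (simp add: K_def dilation_def pd_\<phi> mult_ac)
  also have "\<dots> = K * ((1 / s ^ 3) *\<^sub>R (LINT z|lebesgue. u z * complex_of_real (pd i \<psi> z)))"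
    using s by (subst integral_comp_scaleR) auto
  also have "\<dots> = - (K * ((1 / s ^ 3) *\<^sub>R (LINT z|lebesgue. g z * complex_of_real (\<psi> z))))"
    using w \<psi>_test by (simp add: weak_partial_def)
  also have "\<dots> = - (K * (LINT x|lebesgue. (\<lambda>z. g z * complex_of_real (\<psi> z)) (s *\<^sub>R x)))"
    using s by (subst integral_comp_scaleR) auto
  also have "\<dots> = - (LINT x|lebesgue. complex_of_real s * dilation s g x * complex_of_real (\<phi> x))"
    by (subst integral_mult_right_zero[symmetric]) (simp add: K_def dilation_def \<phi>_eq mult_ac)
  finally show "(LINT x|lebesgue. dilation s u x * complex_of_real (pd i \<phi> x))
      = - (LINT x|lebesgue. complex_of_real s * dilation s g x * complex_of_real (\<phi> x))" .
qed

lemma norm_dilation: "s > 0 \<Longrightarrow> cmod (dilation s u x) = s powr (3/2) * cmod (u (s *\<^sub>R x))"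
  by (simp add: dilation_def norm_mult)

lemma norm_dilation_power2:
  assumes "s > 0"
  shows "(cmod (dilation s u x))\<^sup>2 = s ^ 3 * (cmod (u (s *\<^sub>R x)))\<^sup>2"
proof -
  have "(s powr (3/2))\<^sup>2 = s powr (3/2 + 3/2)"
    by (simp add: power2_eq_square powr_add[symmetric])
  also have "\<dots> = s ^ 3"
    using assms by (simp add: powr_numeral)
  finally show ?thesis
    using assms by (simp add: norm_dilation power_mult_distrib)
qed

lemma square_integrable_dilation:
  assumes s: "s > 0" and u: "square_integrable u"
  shows "square_integrable (dilation s u)"
proof -
  have "integrable lebesgue (\<lambda>x. (\<lambda>z. (cmod (u z))\<^sup>2) (s *\<^sub>R x))"
    using u s integrable_comp_scaleR_iff[of s "\<lambda>z. (cmod (u z))\<^sup>2"]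
    by (simp add: square_integrable_def)
  then have "integrable lebesgue (\<lambda>x. (cmod (dilation s u x))\<^sup>2)"
    using s by (simp add: norm_dilation_power2)
  moreover have "(\<lambda>x. u (s *\<^sub>R x)) \<in> borel_measurable lebesgue"
    using measurable_compose[OF lebesgue_measurable_scaling] u by (auto simp: square_integrable_def)
  then have "dilation s u \<in> borel_measurable lebesgue"
    unfolding dilation_def[abs_def] by (intro borel_measurable_times borel_measurable_const)
  ultimately show ?thesis by (simp add: square_integrable_def)
qed

lemma square_integrable_const_mult:
  assumes "square_integrable g"
  shows "square_integrable (\<lambda>x. c * g x)"
proof -
  have "integrable lebesgue (\<lambda>x. (cmod c)\<^sup>2 * (cmod (g x))\<^sup>2)"
    using assms by (simp add: square_integrable_def)
  moreover have "(\<lambda>x. c * g x) \<in> borel_measurable lebesgue"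
    using assms unfolding square_integrable_def by (intro borel_measurable_times) auto
  ultimately show ?thesis
    by (simp add: square_integrable_def norm_mult power_mult_distrib)
qed

lemma wgrad_weak_partial:
  assumes "u \<in> H1"
  shows "square_integrable (wgrad u i)" and "weak_partial u i (wgrad u i)"
proof -
  have "\<exists>g. square_integrable g \<and> weak_partial u i g"
    using assms by (simp add: H1_def)
  then have "square_integrable (wgrad u i) \<and> weak_partial u i (wgrad u i)"
    unfolding wgrad_def by (rule someI_ex)
  then show "square_integrable (wgrad u i)" and "weak_partial u i (wgrad u i)" by auto
qed

lemma dilation_in_H1:
  assumes s: "s > 0" and u: "u \<in> H1"
  shows "dilation s u \<in> H1"
proof -
  have "square_integrable (\<lambda>x. complex_of_real s * dilation s (wgrad u i) x)" for i
    by (intro square_integrable_const_mult square_integrable_dilation[OF s] wgrad_weak_partial(1)[OF u])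
  then show ?thesis
    using weak_partial_dilation[OF s wgrad_weak_partial(2)[OF u]] u square_integrable_dilation[OF s]
    by (auto simp: H1_def)
qed

lemma L2sq_dilation: "s > 0 \<Longrightarrow> L2sq (dilation s u) = L2sq u"
  by (simp add: L2sq_def norm_dilation_power2 integral_comp_scaleR[where f="\<lambda>z. (cmod (u z))\<^sup>2"])

lemma Lpow_dilation: "s > 0 \<Longrightarrow> Lpow p (dilation s u) = s powr (3/2 * p - 3) * Lpow p u"
  by (simp add: Lpow_def norm_dilation powr_mult powr_powr powr_diff powr_realpow
      integral_comp_scaleR[where f="\<lambda>z. cmod (u z) powr p"])

lemma Dcoul_dilation:
  assumes s: "s > 0"
  shows "Dcoul (dilation s u) = s * Dcoul u"
proof -
  define W where "W w z = (cmod (u w))\<^sup>2 * (cmod (u z))\<^sup>2 / dist w z" for w z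
  define V where "V w = (LINT z|lebesgue. W w z)" for w
  have dist_scaleR: "dist (s *\<^sub>R x) (s *\<^sub>R y) = s * dist x y" for x y :: R3
    using s by (simp add: dist_norm flip: scaleR_diff_right)
  have integrand: "(cmod (dilation s u x))\<^sup>2 * (cmod (dilation s u y))\<^sup>2 / dist x y
      = s ^ 7 * W (s *\<^sub>R x) (s *\<^sub>R y)" for x y
  proof -
    have "s ^ 3 * a * (s ^ 3 * b) / d = s ^ 7 * (a * b / (s * d))" for a b d :: real
      using s by (cases "d = 0") (simp_all add: field_simps eval_nat_numeral)
    then show ?thesis
      by (simp add: W_def norm_dilation_power2[OF s] dist_scaleR)
  qed
  have inner: "(LINT y|lebesgue. (cmod (dilation s u x))\<^sup>2 * (cmod (dilation s u y))\<^sup>2 / dist x y)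
      = s ^ 4 * V (s *\<^sub>R x)" for x
  proof -
    have "(LINT y|lebesgue. (cmod (dilation s u x))\<^sup>2 * (cmod (dilation s u y))\<^sup>2 / dist x y)
        = s ^ 7 * (LINT y|lebesgue. W (s *\<^sub>R x) (s *\<^sub>R y))"
      unfolding integrand by (rule integral_mult_right_zero)
    also have "\<dots> = s ^ 7 * (V (s *\<^sub>R x) / s ^ 3)"
      using s integral_comp_scaleR[of s "W (s *\<^sub>R x)"] by (simp add: V_def)
    finally show ?thesis
      using s by (simp add: field_simps eval_nat_numeral)
  qed
  have "Dcoul (dilation s u) = s ^ 4 * (LINT x|lebesgue. V (s *\<^sub>R x))"
    unfolding Dcoul_def inner by (rule integral_mult_right_zero)
  also have "\<dots> = s ^ 4 * (Dcoul u / s ^ 3)"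
    using s integral_comp_scaleR[of s V] by (simp add: Dcoul_def V_def W_def)
  finally show ?thesis
    using s by (simp add: field_simps eval_nat_numeral)
qed

lemma kinetic_dilation:
  assumes s: "s > 0" and u: "u \<in> H1"
  shows "kinetic (dilation s u) = s\<^sup>2 * kinetic u"
proof -
  let ?g = "\<lambda>i x. complex_of_real s * dilation s (wgrad u i) x"
  have g: "square_integrable (?g i)" for i
    by (intro square_integrable_const_mult square_integrable_dilation[OF s] wgrad_weak_partial(1)[OF u])
  have "AE x in lebesgue. wgrad (dilation s u) i x = ?g i x" for i
    using wgrad_weak_partial[OF dilation_in_H1[OF s u]] g
      weak_partial_dilation[OF s wgrad_weak_partial(2)[OF u]]
    by (rule weak_partial_unique)
  then have ae: "AE x in lebesgue. \<forall>i\<in>UNIV. wgrad (dilation s u) i x = ?g i x"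
    by (subst AE_finite_all) auto
  have "kinetic (dilation s u) = (LINT x|lebesgue. (\<Sum>i\<in>UNIV. (cmod (?g i x))\<^sup>2))"
    unfolding kinetic_def
  proof (rule integral_cong_AE)
    have "wgrad (dilation s u) i \<in> borel_measurable lebesgue" for i
      using wgrad_weak_partial(1)[OF dilation_in_H1[OF s u]] by (simp add: square_integrable_def)
    then show "(\<lambda>x. \<Sum>i\<in>UNIV. (cmod (wgrad (dilation s u) i x))\<^sup>2) \<in> borel_measurable lebesgue"
      by measurable
    have "?g i \<in> borel_measurable lebesgue" for i
      using g by (simp add: square_integrable_def)
    then show "(\<lambda>x. \<Sum>i\<in>UNIV. (cmod (?g i x))\<^sup>2) \<in> borel_measurable lebesgue"
      by measurable
    show "AE x in lebesgue. (\<Sum>i\<in>UNIV. (cmod (wgrad (dilation s u) i x))\<^sup>2)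
        = (\<Sum>i\<in>UNIV. (cmod (?g i x))\<^sup>2)"
      using ae by eventually_elim simp
  qed
  also have "\<dots> = s ^ 5 * (LINT x|lebesgue. (\<lambda>z. \<Sum>i\<in>UNIV. (cmod (wgrad u i z))\<^sup>2) (s *\<^sub>R x))"
    by (subst integral_mult_right_zero[symmetric])
      (simp add: norm_mult power_mult_distrib norm_dilation_power2[OF s] sum_distrib_left
        mult.assoc flip: power_add)
  also have "\<dots> = s ^ 5 * (kinetic u / s ^ 3)"
    using s by (subst integral_comp_scaleR) (simp_all add: kinetic_def)
  finally show ?thesis
    using s by (simp add: field_simps eval_nat_numeral)
qed

lemma energy_dilation:
  assumes "s > 0" and "u \<in> H1"
  shows "energy C \<alpha> (dilation s u) = 1/2 * s\<^sup>2 * kinetic u + 1/4 * s * Dcoul u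
    - C / (2*\<alpha>+2) * s powr (3*\<alpha>) * Lpow (2*\<alpha>+2) u"
  using assms by (simp add: energy_def kinetic_dilation Dcoul_dilation Lpow_dilation algebra_simps)

lemma dilation_in_Sigma_M: "s > 0 \<Longrightarrow> u \<in> Sigma_M M \<Longrightarrow> dilation s u \<in> Sigma_M M"
  by (simp add: Sigma_M_def dilation_in_H1 L2sq_dilation)

theorem proposition2p11:
  fixes C \<alpha> M :: real and \<phi> :: "R3 \<Rightarrow> complex"
  assumes "0 < \<alpha>" and "\<alpha> < 2/3" and "C > 0" and "M > 0"
    and "is_minimizer C \<alpha> M \<phi>"
  shows "kinetic \<phi> + 1/4 * Dcoul \<phi> - 3 * \<alpha> * C / (2*\<alpha>+2) * Lpow (2*\<alpha>+2) \<phi> = 0"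
proof -
  have \<phi>: "\<phi> \<in> Sigma_M M" and min: "\<And>v. v \<in> Sigma_M M \<Longrightarrow> energy C \<alpha> \<phi> \<le> energy C \<alpha> v"
    using assms(5) by (auto simp: is_minimizer_def)
  define f where "f s = 1/2 * s\<^sup>2 * kinetic \<phi> + 1/4 * s * Dcoul \<phi>
    - C / (2*\<alpha>+2) * s powr (3*\<alpha>) * Lpow (2*\<alpha>+2) \<phi>" for s
  have "f 1 = energy C \<alpha> \<phi>"
    by (simp add: f_def energy_def)
  then have f_min: "f 1 \<le> f s" if "s > 0" for s
    using min[OF dilation_in_Sigma_M[OF that \<phi>]] energy_dilation[OF that] \<phi>
    by (simp add: f_def Sigma_M_def)
  have "(f has_real_derivative kinetic \<phi> + 1/4 * Dcoul \<phi>
      - C / (2*\<alpha>+2) * (3*\<alpha>) * Lpow (2*\<alpha>+2) \<phi>) (at 1)"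
    unfolding f_def[abs_def] using has_real_derivative_powr[of 1 "3*\<alpha>"] \<open>0 < \<alpha>\<close>
    by (auto intro!: derivative_eq_intros)
  then have "kinetic \<phi> + 1/4 * Dcoul \<phi> - C / (2*\<alpha>+2) * (3*\<alpha>) * Lpow (2*\<alpha>+2) \<phi> = 0"
    by (rule DERIV_local_min[of _ _ 1 "1/2"]) (auto intro!: f_min split: abs_split)
  then show ?thesis by simp
qed

end
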